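(* A standard playable enriched $Ł_n$-frame $\mathfrak F$ is truly playable if and only if the formula $[\varnothing]\phi\leftrightarrow[\mathcal O]\phi$ is valid in $\mathfrak F$ for every $\phi\in\mathsf{Form}_{\mathcal L^+}$.
   Context: $Ł_n=\{0,\frac1n,\dots,1\}$ with $\neg x=1-x$, $x\oplus y=\min(x+y,1)$, $x\odot y=\max(x+y-1,0)$, $x\to y=\min(1,1-x+y)$, $\wedge=\min$, applied pointwise; $0,1$ also constant functions; $\chi_Y$ is the characteristic function of $Y$. $N$ finite set of players, $|N|\ge2$. An $Ł_n$-valued effectivity function on a set $S$ is $E:\mathcal P N\times Ł_n^S\to Ł_n$. It is: outcome monotonic if $f\ge g$ implies $E(C,f)\ge E(C,g)$; $N$-maximal if $\neg E(\varnothing,\neg f)\le E(N,f)$; superadditive if $E(C_1,f)\wedge E(C_2,g)\le E(C_1\cup C_2,f\wedge g)$ whenever $C_1\cap C_2=\varnothing$; homogeneous if $E(C,f\oplus f)=E(C,f)\oplus E(C,f)$ and $E(C,f\odot f)=E(C,f)\odot E(C,f)$; has liveness if $E(C,1)=1$; has safety if $E(C,0)=0$; principal if there is $g$ with $\{f\mid E(\varnothing,f)=1\}=\{f\mid f\ge g\odot\cdots\odot g\ (n\text{ factors})\}$. Playable: first six; truly playable: playable and principal. Formulas of $\mathcal L^+$: $\phi::=1\mid p\mid\phi\to\phi\mid\neg\phi\mid[C]\phi\mid[\mathcal O]\phi$ ($p$ in a countably infinite set $\mathsf{Prop}$, $C\subseteq N$); $\phi\leftrightarrow\psi=(\phi\to\psi)\odot(\psi\to\phi)$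 with $\phi\odot\psi=\neg(\phi\to\neg\psi)$. An enriched $Ł_n$-frame is $(S,E,R)$ with $S\ne\varnothing$, $E(u)$ an $Ł_n$-valued effectivity function on $S$ for each $u\in S$, and $R\subseteq S\times S$; it is standard if $R=\{(u,v)\mid E(u)(\varnothing,\neg\chi_{\{v\}})=0\}$, and (truly) playable if every $E(u)$ is. A model on it adds $\mathrm{Val}:S\times\mathsf{Prop}\to Ł_n$ extended by the Łukasiewicz operations on $1,\neg,\to$, $\mathrm{Val}(u,[C]\phi)=E(u)(C,\mathrm{Val}(-,\phi))$ and $\mathrm{Val}(u,[\mathcal O]\phi)=\min\{\mathrm{Val}(v,\phi)\mid(u,v)\in R\}$ (minimum of the empty set being $1$). A formula is valid in a frame if its value is $1$ at every state of every model based on the frame. *)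

theory Defs
  imports Main "HOL-Library.Indicator_Function"
begin

definition Ln :: "nat \<Rightarrow> real set" where
  "Ln n = {real k / real n | k. k \<le> n}"

definition lval :: "nat \<Rightarrow> ('s \<Rightarrow> real) \<Rightarrow> bool" where
  "lval n f \<longleftrightarrow> (\<forall>s. f s \<in> Ln n)"

definition loplus :: "real \<Rightarrow> real \<Rightarrow> real" where
  "loplus x y = min (x + y) 1"

definition lodot :: "real \<Rightarrow> real \<Rightarrow> real" where
  "lodot x y = max (x + y - 1) 0"

definition limp :: "real \<Rightarrow> real \<Rightarrow> real" where
  "limp x y = min 1 (1 - x + y)"

fun lpow :: "nat \<Rightarrow> ('s \<Rightarrow> real) \<Rightarrow> ('s \<Rightarrow> real)" where
  "lpow 0 g = (\<lambda>s. 1)"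
| "lpow (Suc k) g = (\<lambda>s. lodot (g s) (lpow k g s))"

type_synonym ('a, 's) eff = "'a set \<Rightarrow> ('s \<Rightarrow> real) \<Rightarrow> real"

definition eff_fun :: "nat \<Rightarrow> ('a, 's) eff \<Rightarrow> bool" where
  "eff_fun n E \<longleftrightarrow> (\<forall>C f. lval n f \<longrightarrow> E C f \<in> Ln n)"

definition outcome_monotonic :: "nat \<Rightarrow> ('a, 's) eff \<Rightarrow> bool" where
  "outcome_monotonic n E \<longleftrightarrow>
     (\<forall>C f g. lval n f \<longrightarrow> lval n g \<longrightarrow> (\<forall>s. g s \<le> f s) \<longrightarrow> E C g \<le> E C f)"

definition N_maximal :: "nat \<Rightarrow> ('a, 's) eff \<Rightarrow> bool" where
  "N_maximal n E \<longleftrightarrow>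
     (\<forall>f. lval n f \<longrightarrow> 1 - E {} (\<lambda>s. 1 - f s) \<le> E UNIV f)"

definition superadditive :: "nat \<Rightarrow> ('a, 's) eff \<Rightarrow> bool" where
  "superadditive n E \<longleftrightarrow>
     (\<forall>C1 C2 f g. lval n f \<longrightarrow> lval n g \<longrightarrow> C1 \<inter> C2 = {} \<longrightarrow>
        min (E C1 f) (E C2 g) \<le> E (C1 \<union> C2) (\<lambda>s. min (f s) (g s)))"

definition homogeneous :: "nat \<Rightarrow> ('a, 's) eff \<Rightarrow> bool" where
  "homogeneous n E \<longleftrightarrow>
     (\<forall>C f. lval n f \<longrightarrow>
        E C (\<lambda>s. loplus (f s) (f s)) = loplus (E C f) (E C f) \<and>
        E C (\<lambda>s. lodot (f s) (f s)) = lodot (E C f) (E C f))"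

definition liveness :: "('a, 's) eff \<Rightarrow> bool" where
  "liveness E \<longleftrightarrow> (\<forall>C. E C (\<lambda>s. 1) = 1)"

definition safety :: "('a, 's) eff \<Rightarrow> bool" where
  "safety E \<longleftrightarrow> (\<forall>C. E C (\<lambda>s. 0) = 0)"

definition principal :: "nat \<Rightarrow> ('a, 's) eff \<Rightarrow> bool" where
  "principal n E \<longleftrightarrow>
     (\<exists>g. lval n g \<and>
        {f. lval n f \<and> E {} f = 1} = {f. lval n f \<and> (\<forall>s. lpow n g s \<le> f s)})"

definition playable :: "nat \<Rightarrow> ('a, 's) eff \<Rightarrow> bool" where
  "playable n E \<longleftrightarrow> outcome_monotonic n E \<and> N_maximal n E \<and> superadditive n E \<and>
     homogeneous n E \<and> liveness E \<and> safety E"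

definition truly_playable :: "nat \<Rightarrow> ('a, 's) eff \<Rightarrow> bool" where
  "truly_playable n E \<longleftrightarrow> playable n E \<and> principal n E"

definition enriched_frame :: "nat \<Rightarrow> ('s \<Rightarrow> ('a, 's) eff) \<Rightarrow> ('s \<times> 's) set \<Rightarrow> bool" where
  "enriched_frame n E R \<longleftrightarrow> (\<forall>u. eff_fun n (E u))"

definition standard_frame :: "('s \<Rightarrow> ('a, 's) eff) \<Rightarrow> ('s \<times> 's) set \<Rightarrow> bool" where
  "standard_frame E R \<longleftrightarrow>
     R = {(u, v). E u {} (\<lambda>w. 1 - indicator {v} w) = 0}"

definition playable_frame :: "nat \<Rightarrow> ('s \<Rightarrow> ('a, 's) eff) \<Rightarrow> bool" where
  "playable_frame n E \<longleftrightarrow> (\<forall>u. playable n (E u))"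

definition truly_playable_frame :: "nat \<Rightarrow> ('s \<Rightarrow> ('a, 's) eff) \<Rightarrow> bool" where
  "truly_playable_frame n E \<longleftrightarrow> (\<forall>u. truly_playable n (E u))"

datatype 'a form =
    FOne
  | FProp nat
  | FImp "'a form" "'a form"
  | FNeg "'a form"
  | FBox "'a set" "'a form"
  | FBoxO "'a form"

definition FOdot :: "'a form \<Rightarrow> 'a form \<Rightarrow> 'a form" where
  "FOdot \<phi> \<psi> = FNeg (FImp \<phi> (FNeg \<psi>))"

definition FIff :: "'a form \<Rightarrow> 'a form \<Rightarrow> 'a form" where
  "FIff \<phi> \<psi> = FOdot (FImp \<phi> \<psi>) (FImp \<psi> \<phi>)"

primrec sem :: "('s \<Rightarrow> ('a, 's) eff) \<Rightarrow> ('s \<times> 's) set \<Rightarrow> ('s \<Rightarrow> nat \<Rightarrow> real)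
    \<Rightarrow> 's \<Rightarrow> 'a form \<Rightarrow> real" where
  "sem E R V u FOne = 1"
| "sem E R V u (FProp p) = V u p"
| "sem E R V u (FImp \<phi> \<psi>) = limp (sem E R V u \<phi>) (sem E R V u \<psi>)"
| "sem E R V u (FNeg \<phi>) = 1 - sem E R V u \<phi>"
| "sem E R V u (FBox C \<phi>) = E u C (\<lambda>v. sem E R V v \<phi>)"
| "sem E R V u (FBoxO \<phi>) =
     (if {v. (u, v) \<in> R} = {} then 1
      else Min ((\<lambda>v. sem E R V v \<phi>) ` {v. (u, v) \<in> R}))"

definition valid_in_frame :: "nat \<Rightarrow> ('s \<Rightarrow> ('a, 's) eff) \<Rightarrow> ('s \<times> 's) set \<Rightarrow> 'a form \<Rightarrow> bool" where
  "valid_in_frame n E R \<phi> \<longleftrightarrow>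
     (\<forall>V. (\<forall>u p. V u p \<in> Ln n) \<longrightarrow> (\<forall>u. sem E R V u \<phi> = 1))"

end

(*
  A homogeneous effectivity function commutes with the maps x \<mapsto> x \<oplus> x and x \<mapsto> x \<odot> x,
  and compositions of these separate any two points x < y of [0,1] into 0 and 1. Hence
  E(u)(\<emptyset>, -) is determined by the set of f it sends to 1. Principality says that these are
  exactly the f equal to 1 on some set Y; separation then gives E(u)(\<emptyset>, f) = min_Y f, and
  testing with 1 - \<chi>_{v} shows that Y is the set of R-successors of u in a standard frame,
  which is the validity of [\<emptyset>]\<phi> \<leftrightarrow> [O]\<phi>. Conversely, validity for a propositional variable makes
  E(u)(\<emptyset>, -) the minimum over the successors, whose 1-filter is generated by their
  characteristic function.
*)

theory Submission
  imports Defs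
begin

lemma Ln_iff:
  assumes "n \<ge> 1"
  shows "x \<in> Ln n \<longleftrightarrow> 0 \<le> x \<and> x \<le> 1 \<and> (\<exists>k::int. x = k / n)"
proof
  assume "x \<in> Ln n"
  then obtain k where k: "k \<le> n" "x = real k / real n" unfolding Ln_def by auto
  then show "0 \<le> x \<and> x \<le> 1 \<and> (\<exists>k::int. x = k / n)" using assms
    by (auto simp: divide_le_eq_1 intro!: exI[of _ "int k"])
next
  assume h: "0 \<le> x \<and> x \<le> 1 \<and> (\<exists>k::int. x = k / n)"
  then obtain k :: int where k: "x = k / n" by auto
  have "real n > 0" using assms by auto
  then have "0 \<le> k" "k \<le> int n" using h k by (auto simp: divide_simps)
  then show "x \<in> Ln n" unfolding Ln_def using k by (auto intro!: exI[of _ "nat k"])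
qed

lemma Ln_bounds: "x \<in> Ln n \<Longrightarrow> 0 \<le> x \<and> x \<le> 1"
  unfolding Ln_def by (auto simp: divide_le_eq_1)

lemma finite_Ln: "finite (Ln n)"
proof -
  have "Ln n = (\<lambda>k. real k / real n) ` {..n}" unfolding Ln_def by auto
  then show ?thesis by simp
qed

lemma Ln_clamp_int:
  assumes "n \<ge> 1"
  shows "max 0 (min 1 (of_int m / n)) \<in> Ln n"
proof -
  have "real n > 0" using assms by simp
  consider "m < 0" | "m > int n" | "0 \<le> m" "m \<le> int n" by linarith
  then show ?thesis
  proof cases
    case 1
    then have "of_int m / n < 0" using \<open>real n > 0\<close> by (simp add: divide_neg_pos)
    then show ?thesis using assms by (auto simp: Ln_iff intro!: exI[of _ 0])
  next
    case 2
    then have "of_int m / n > 1" using \<open>real n > 0\<close> by (simp add: divide_simps)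
    then show ?thesis using assms by (auto simp: Ln_iff intro!: exI[of _ "int n"])
  next
    case 3
    then have "0 \<le> of_int m / n" "of_int m / n \<le> (1::real)"
      using \<open>real n > 0\<close> by (auto simp: divide_simps)
    then show ?thesis using assms by (auto simp: Ln_iff)
  qed
qed

text \<open>All Lukasiewicz operations are clamped integer-affine maps, so this gives closure of \<open>Ln n\<close>.\<close>

lemma Ln_clamp_combination:
  assumes "n \<ge> 1" "x \<in> Ln n" "y \<in> Ln n"
  shows "max 0 (min 1 (of_int a + of_int b * x + of_int c * y)) \<in> Ln n"
proof -
  obtain k j :: int where x: "x = k / n" and y: "y = j / n" using assms by (auto simp: Ln_iff)
  have "of_int a + of_int b * x + of_int c * y = of_int (a * n + b * k + c * j) / n"
    using assms(1) unfolding x y by (simp add: field_simps)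
  then show ?thesis using Ln_clamp_int[OF assms(1)] by metis
qed

lemma Ln_0: "n \<ge> 1 \<Longrightarrow> 0 \<in> Ln n"
  using Ln_clamp_int[of n 0] by simp

lemma Ln_1: "n \<ge> 1 \<Longrightarrow> 1 \<in> Ln n"
  using Ln_clamp_int[of n "int n"] by simp

lemma Ln_neg: "n \<ge> 1 \<Longrightarrow> x \<in> Ln n \<Longrightarrow> 1 - x \<in> Ln n"
  using Ln_clamp_combination[of n x x 1 "-1" 0] Ln_bounds[of x n] by simp

lemma Ln_limp: "n \<ge> 1 \<Longrightarrow> x \<in> Ln n \<Longrightarrow> y \<in> Ln n \<Longrightarrow> limp x y \<in> Ln n"
  using Ln_clamp_combination[of n x y 1 "-1" 1] Ln_bounds[of x n] Ln_bounds[of y n]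
  by (simp add: limp_def)

lemma Ln_loplus: "n \<ge> 1 \<Longrightarrow> x \<in> Ln n \<Longrightarrow> y \<in> Ln n \<Longrightarrow> loplus x y \<in> Ln n"
  using Ln_clamp_combination[of n x y 0 1 1] Ln_bounds[of x n] Ln_bounds[of y n]
  by (simp add: loplus_def min.commute)

lemma Ln_lodot:
  assumes "n \<ge> 1" "x \<in> Ln n" "y \<in> Ln n"
  shows "lodot x y \<in> Ln n"
proof -
  have "lodot x y = max 0 (min 1 (of_int (-1) + of_int 1 * x + of_int 1 * y))"
    using Ln_bounds[OF assms(2)] Ln_bounds[OF assms(3)] by (simp add: lodot_def)
  then show ?thesis using Ln_clamp_combination[OF assms] by metis
qed

lemma lpow_const: "0 \<le> x \<Longrightarrow> x \<le> 1 \<Longrightarrow> lpow k (\<lambda>_. x) s = max (real k * x - (real k - 1)) 0"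
  by (induction k) (auto simp: lodot_def max_def algebra_simps)

lemma lpow_pointwise: "lpow k g s = lpow k (\<lambda>_. g s) s"
  by (induction k) auto

lemma lpow_Ln:
  assumes "n \<ge> 1" "g s \<in> Ln n"
  shows "lpow n g s = (if g s = 1 then 1 else 0)"
proof -
  obtain k where k: "k \<le> n" "g s = real k / real n" using assms(2) unfolding Ln_def by auto
  have "lpow n g s = max (real n * g s - (real n - 1)) 0"
    using Ln_bounds[OF assms(2)] by (subst lpow_pointwise) (simp add: lpow_const)
  also have "real n * g s = real k" using k assms(1) by simp
  finally show ?thesis using k assms(1) by (auto simp: max_def)
qed

lemma principal_iff_filter:
  assumes "n \<ge> 1"
  shows "principal n F \<longleftrightarrow> (\<exists>Y. \<forall>h. lval n h \<longrightarrow> (F {} h = 1 \<longleftrightarrow> (\<forall>s\<in>Y. h s = 1)))"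
proof
  assume "principal n F"
  then obtain g where g: "lval n g"
    and filter: "{h. lval n h \<and> F {} h = 1} = {h. lval n h \<and> (\<forall>s. lpow n g s \<le> h s)}"
    unfolding principal_def by auto
  have "F {} h = 1 \<longleftrightarrow> (\<forall>s\<in>{s. g s = 1}. h s = 1)" if h: "lval n h" for h
  proof -
    have "lpow n g s \<le> h s \<longleftrightarrow> (g s = 1 \<longrightarrow> h s = 1)" for s
      using lpow_Ln[OF assms, of g s] g h Ln_bounds[of "h s" n] unfolding lval_def by auto
    then show ?thesis using filter h by auto
  qed
  then show "\<exists>Y. \<forall>h. lval n h \<longrightarrow> (F {} h = 1 \<longleftrightarrow> (\<forall>s\<in>Y. h s = 1))" by blast
next
  assume "\<exists>Y. \<forall>h. lval n h \<longrightarrow> (F {} h = 1 \<longleftrightarrow> (\<forall>s\<in>Y. h s = 1))"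
  then obtain Y where Y: "\<And>h. lval n h \<Longrightarrow> F {} h = 1 \<longleftrightarrow> (\<forall>s\<in>Y. h s = 1)" by blast
  define g where "g = (\<lambda>s. indicator Y s :: real)"
  have g: "lval n g" unfolding lval_def g_def using assms by (auto simp: indicator_def Ln_0 Ln_1)
  have "lpow n g s \<le> h s \<longleftrightarrow> (s \<in> Y \<longrightarrow> h s = 1)" if "lval n h" for h s
    using lpow_Ln[OF assms, of g s] g that Ln_bounds[of "h s" n]
    unfolding lval_def g_def by (auto simp: indicator_def)
  then show "principal n F" unfolding principal_def using g Y by (intro exI[of _ g]) auto
qed

fun apply_word :: "bool list \<Rightarrow> real \<Rightarrow> real" where
  "apply_word [] x = x"
| "apply_word (b # w) x = apply_word w (if b then loplus x x else lodot x x)"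

lemma apply_word_mono: "x \<le> y \<Longrightarrow> apply_word w x \<le> apply_word w y"
proof (induction w arbitrary: x y)
  case (Cons b w)
  show ?case unfolding apply_word.simps
    by (rule Cons.IH) (use Cons.prems in \<open>auto simp: loplus_def lodot_def\<close>)
qed simp

lemma apply_word_Ln: "n \<ge> 1 \<Longrightarrow> x \<in> Ln n \<Longrightarrow> apply_word w x \<in> Ln n"
  by (induction w arbitrary: x) (auto simp: Ln_loplus Ln_lodot)

lemma homogeneous_apply_word:
  assumes "homogeneous n F" "n \<ge> 1" "lval n f"
  shows "F C (\<lambda>s. apply_word w (f s)) = apply_word w (F C f)"
  using assms(3)
proof (induction w arbitrary: f)
  case (Cons b w)
  define f' where "f' = (\<lambda>s. if b then loplus (f s) (f s) else lodot (f s) (f s))"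
  have "lval n f'" using Cons.prems assms(2) unfolding f'_def lval_def
    by (auto simp: Ln_loplus Ln_lodot)
  then have "F C (\<lambda>s. apply_word w (f' s)) = apply_word w (F C f')" by (rule Cons.IH)
  moreover have "F C f' = (if b then loplus (F C f) (F C f) else lodot (F C f) (F C f))"
    using assms(1) Cons.prems unfolding homogeneous_def f'_def by (cases b) auto
  ultimately show ?case by (simp add: f'_def)
qed simp

lemma apply_word_squarings:
  "0 \<le> x \<Longrightarrow> x \<le> 1 \<Longrightarrow> apply_word (replicate m False) x = max 0 (1 - 2 ^ m * (1 - x))"
proof (induction m arbitrary: x)
  case (Suc m)
  have "apply_word (replicate (Suc m) False) x = max 0 (1 - 2 ^ m * (1 - lodot x x))"
    using Suc by (simp add: lodot_def)
  also have "\<dots> = max 0 (1 - 2 ^ Suc m * (1 - x))"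
  proof (cases "1/2 \<le> x")
    case False
    have "1 \<le> 2 ^ m * (2 * (1 - x))"
      using False mult_mono[of 1 "2 ^ m" 1 "2 * (1 - x)"] by simp
    then have "1 - 2 ^ Suc m * (1 - x) \<le> 0" by (simp add: algebra_simps)
    moreover have "1 - 2 ^ m * (1 - lodot x x) \<le> 0" using False by (simp add: lodot_def)
    ultimately show ?thesis by (simp add: max_absorb1)
  qed (simp add: lodot_def algebra_simps)
  finally show ?case .
qed simp

lemma apply_word_separates_from_1:
  assumes "0 \<le> x" "x < 1"
  shows "\<exists>w. apply_word w x = 0 \<and> apply_word w 1 = 1"
proof -
  obtain m where "1 / (1 - x) < 2 ^ m" using real_arch_pow[of "2::real"] by auto
  then have "1 \<le> 2 ^ m * (1 - x)" using assms by (simp add: divide_simps)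
  then show ?thesis using assms
    by (intro exI[of _ "replicate m False"]) (simp add: apply_word_squarings)
qed

text \<open>Induction on \<open>k\<close>: doubling (below \<open>1/2\<close>) or squaring (above \<open>1/2\<close>) doubles the gap.\<close>

lemma apply_word_separates_gap:
  "1 \<le> 2 ^ k * (y - x) \<Longrightarrow> 0 \<le> x \<Longrightarrow> x < y \<Longrightarrow> y \<le> (1::real)
    \<Longrightarrow> \<exists>w. apply_word w x = 0 \<and> apply_word w y = 1"
proof (induction k arbitrary: x y)
  case 0
  then show ?case by (auto intro!: exI[of _ "[]"])
next
  case (Suc k)
  consider "y \<le> 1/2" | "1/2 \<le> x" | "x < 1/2" "1/2 < y" by linarith
  then show ?case
  proof cases
    case 1
    have "1 \<le> 2 ^ k * (2 * y - 2 * x)" using Suc.prems(1) by (simp add: algebra_simps)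
    then obtain w where "apply_word w (2 * x) = 0" "apply_word w (2 * y) = 1"
      using Suc.IH 1 Suc.prems by fastforce
    then show ?thesis using 1 Suc.prems by (intro exI[of _ "True # w"]) (simp add: loplus_def)
  next
    case 2
    have "1 \<le> 2 ^ k * ((2 * y - 1) - (2 * x - 1))" using Suc.prems(1) by (simp add: algebra_simps)
    then obtain w where "apply_word w (2 * x - 1) = 0" "apply_word w (2 * y - 1) = 1"
      using Suc.IH 2 Suc.prems by fastforce
    then show ?thesis using 2 Suc.prems by (intro exI[of _ "False # w"]) (simp add: lodot_def)
  next
    case 3
    then obtain w where "apply_word w (2 * x) = 0" "apply_word w 1 = 1"
      using apply_word_separates_from_1[of "2 * x"] Suc.prems by auto
    then show ?thesis using 3 Suc.prems by (intro exI[of _ "True # w"]) (simp add: loplus_def)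
  qed
qed

lemma apply_word_separates:
  assumes "0 \<le> x" "x < y" "y \<le> (1::real)"
  shows "\<exists>w. apply_word w x = 0 \<and> apply_word w y = 1"
proof -
  obtain k where "1 / (y - x) < 2 ^ k" using real_arch_pow[of "2::real"] by auto
  then have "1 \<le> 2 ^ k * (y - x)" using assms by (simp add: divide_simps)
  then show ?thesis using apply_word_separates_gap assms by blast
qed

definition min_over :: "'s set \<Rightarrow> ('s \<Rightarrow> real) \<Rightarrow> real" where
  "min_over Y f = (if Y = {} then 1 else Min (f ` Y))"

lemma finite_image_lval: "lval n f \<Longrightarrow> finite (f ` Y)"
  using finite_subset[OF _ finite_Ln] unfolding lval_def by blast

lemma min_over_le: "lval n f \<Longrightarrow> s \<in> Y \<Longrightarrow> min_over Y f \<le> f s"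
  unfolding min_over_def using finite_image_lval[of n f Y] by auto

lemma min_over_attained:
  assumes "lval n f" "Y \<noteq> {}"
  shows "\<exists>s\<in>Y. min_over Y f = f s"
proof -
  have "Min (f ` Y) \<in> f ` Y" using Min_in finite_image_lval[OF assms(1)] assms(2) by blast
  then show ?thesis using assms(2) unfolding min_over_def by auto
qed

lemma min_over_Ln: "n \<ge> 1 \<Longrightarrow> lval n f \<Longrightarrow> min_over Y f \<in> Ln n"
  using min_over_attained[of n f Y] Ln_1 unfolding lval_def by (cases "Y = {}") (auto simp: min_over_def)

lemma min_over_eq_1_iff:
  assumes "lval n f"
  shows "min_over Y f = 1 \<longleftrightarrow> (\<forall>s\<in>Y. f s = 1)"
proof (cases "Y = {}")
  case False
  have "f s \<le> 1" for s using assms Ln_bounds unfolding lval_def by blast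
  then show ?thesis using min_over_le[OF assms] min_over_attained[OF assms False]
    by (metis order_antisym)
qed (simp add: min_over_def)

text \<open>A word separating \<open>F C f\<close> from \<open>min_over Y f\<close> turns their difference into one between
  \<open>0\<close> and \<open>1\<close>, which the hypothesis on the functions sent to \<open>1\<close> rules out.\<close>

lemma homogeneous_eq_min_over:
  assumes n: "n \<ge> 1" and hom: "homogeneous n F" and eff: "eff_fun n F"
    and filter: "\<And>h. lval n h \<Longrightarrow> F C h = 1 \<longleftrightarrow> (\<forall>s\<in>Y. h s = 1)"
    and f: "lval n f"
  shows "F C f = min_over Y f"
proof (rule ccontr)
  define e where "e = F C f"
  define m where "m = min_over Y f"
  have "0 \<le> e" "0 \<le> m" "e \<le> 1" "m \<le> 1"
    using eff f min_over_Ln[OF n f, of Y] Ln_bounds unfolding eff_fun_def e_def m_def by blast+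
  have lval_word: "lval n (\<lambda>s. apply_word w (f s))" for w
    using f apply_word_Ln[OF n] unfolding lval_def by blast
  have word_commutes: "F C (\<lambda>s. apply_word w (f s)) = apply_word w e" for w
    using homogeneous_apply_word[OF hom n f] unfolding e_def by blast
  assume "F C f \<noteq> min_over Y f"
  then consider "e < m" | "m < e" unfolding e_def m_def by linarith
  then show False
  proof cases
    case 1
    then obtain w where w: "apply_word w e = 0" "apply_word w m = 1"
      using apply_word_separates \<open>0 \<le> e\<close> \<open>m \<le> 1\<close> by blast
    have "apply_word w (f s) = 1" if "s \<in> Y" for s
    proof -
      have "apply_word w (f s) \<le> 1" using lval_word[of w] Ln_bounds unfolding lval_def by blast
      moreover have "apply_word w m \<le> apply_word w (f s)"
        using apply_word_mono[OF min_over_le[OF f that]] unfolding m_def .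
      ultimately show ?thesis using w(2) by linarith
    qed
    then have "apply_word w e = 1" using filter[OF lval_word] word_commutes by simp
    then show False using w(1) by simp
  next
    case 2
    then obtain w where w: "apply_word w m = 0" "apply_word w e = 1"
      using apply_word_separates \<open>0 \<le> m\<close> \<open>e \<le> 1\<close> by blast
    have "Y \<noteq> {}" using 2 \<open>e \<le> 1\<close> unfolding m_def min_over_def by auto
    then obtain s where "s \<in> Y" "m = f s" using min_over_attained[OF f] unfolding m_def by blast
    then show False using filter[OF lval_word] word_commutes w by simp
  qed
qed

lemma min_over_co_indicator: "min_over Y (\<lambda>w. 1 - indicator {v} w) = (if v \<in> Y then 0 else 1)"
proof (cases "v \<in> Y")
  case True
  have "(\<lambda>w. 1 - indicator {v} w) ` Y \<subseteq> {0, 1 :: real}" by (auto simp: indicator_def)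
  then have "Min ((\<lambda>w. 1 - indicator {v} w) ` Y) = (0 :: real)"
    using True by (intro Min_eqI) (auto simp: finite_subset indicator_def)
  then show ?thesis using True by (auto simp: min_over_def)
next
  case False
  then have "(\<lambda>w. 1 - indicator {v} w) ` Y = (if Y = {} then {} else {1 :: real})"
    by (auto simp: indicator_def intro: rev_image_eqI)
  then show ?thesis using False by (simp add: min_over_def)
qed

text \<open>In a standard frame \<open>S\<close> is the set of successors of the state whose effectivity function is \<open>F\<close>.\<close>

lemma principal_iff_min_over_unavoidable:
  assumes n: "n \<ge> 1" and hom: "homogeneous n F" and eff: "eff_fun n F"
    and S: "S = {v. F {} (\<lambda>w. 1 - indicator {v} w) = 0}"
  shows "principal n F \<longleftrightarrow> (\<forall>f. lval n f \<longrightarrow> F {} f = min_over S f)"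
proof
  assume "principal n F"
  then obtain Y where Y: "\<And>h. lval n h \<Longrightarrow> F {} h = 1 \<longleftrightarrow> (\<forall>s\<in>Y. h s = 1)"
    using principal_iff_filter[OF n] by blast
  have F_min: "F {} f = min_over Y f" if "lval n f" for f
    using homogeneous_eq_min_over[OF n hom eff Y that] .
  have co_indicator: "lval n (\<lambda>w. 1 - indicator {v} w)" for v
    using n unfolding lval_def by (auto simp: indicator_def Ln_0 Ln_1)
  have "F {} (\<lambda>w. 1 - indicator {v} w) = (if v \<in> Y then 0 else 1)" for v
    using F_min[OF co_indicator] by (simp add: min_over_co_indicator)
  then have "v \<in> S \<longleftrightarrow> v \<in> Y" for v unfolding S by simp
  then have "S = Y" by blast
  then show "\<forall>f. lval n f \<longrightarrow> F {} f = min_over S f" using F_min by blast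
next
  assume "\<forall>f. lval n f \<longrightarrow> F {} f = min_over S f"
  then have "\<forall>h. lval n h \<longrightarrow> (F {} h = 1 \<longleftrightarrow> (\<forall>s\<in>S. h s = 1))"
    using min_over_eq_1_iff by metis
  then show "principal n F" using principal_iff_filter[OF n] by blast
qed

lemma sem_FBoxO: "sem E R V u (FBoxO \<phi>) = min_over {v. (u, v) \<in> R} (\<lambda>v. sem E R V v \<phi>)"
  by (simp add: min_over_def)

lemma sem_FIff_eq_1_iff: "sem E R V u (FIff \<phi> \<psi>) = 1 \<longleftrightarrow> sem E R V u \<phi> = sem E R V u \<psi>"
  unfolding FIff_def FOdot_def by (auto simp: limp_def min_def)

lemma sem_Ln:
  assumes n: "n \<ge> 1" and frame: "enriched_frame n E R" and V: "\<forall>u p. V u p \<in> Ln n"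
  shows "sem E R V u \<phi> \<in> Ln n"
proof (induction \<phi> arbitrary: u)
  case (FBox C \<phi>)
  have "lval n (\<lambda>v. sem E R V v \<phi>)" using FBox unfolding lval_def by auto
  then show ?case using frame unfolding enriched_frame_def eff_fun_def by simp
next
  case (FBoxO \<phi>)
  have "lval n (\<lambda>v. sem E R V v \<phi>)" using FBoxO unfolding lval_def by auto
  then show ?case unfolding sem_FBoxO using min_over_Ln[OF n] by blast
qed (use n V in \<open>auto simp: Ln_1 Ln_neg Ln_limp\<close>)

lemma valid_box_empty_iff_min_over:
  fixes E :: "'s \<Rightarrow> 'a set \<Rightarrow> ('s \<Rightarrow> real) \<Rightarrow> real"
  assumes n: "n \<ge> 1" and frame: "enriched_frame n E R"
  shows "(\<forall>\<phi>. valid_in_frame n E R (FIff (FBox {} \<phi>) (FBoxO \<phi>))) \<longleftrightarrow>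
    (\<forall>u f. lval n f \<longrightarrow> E u {} f = min_over {v. (u, v) \<in> R} f)"
proof
  assume valid: "\<forall>\<phi>. valid_in_frame n E R (FIff (FBox {} \<phi>) (FBoxO \<phi>))"
  show "\<forall>u f. lval n f \<longrightarrow> E u {} f = min_over {v. (u, v) \<in> R} f"
  proof (intro allI impI)
    fix u and f :: "'s \<Rightarrow> real"
    assume "lval n f"
    then have "sem E R (\<lambda>v p. f v) u (FIff (FBox {} (FProp 0)) (FBoxO (FProp 0))) = 1"
      using valid unfolding valid_in_frame_def lval_def by (metis (no_types))
    then show "E u {} f = min_over {v. (u, v) \<in> R} f"
      unfolding sem_FIff_eq_1_iff sem_FBoxO by simp
  qed
next
  assume "\<forall>u f. lval n f \<longrightarrow> E u {} f = min_over {v. (u, v) \<in> R} f"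
  moreover have "lval n (\<lambda>v. sem E R V v \<phi>)" if "\<forall>u p. V u p \<in> Ln n" for V \<phi>
    using sem_Ln[OF n frame that] unfolding lval_def by blast
  ultimately show "\<forall>\<phi>. valid_in_frame n E R (FIff (FBox {} \<phi>) (FBoxO \<phi>))"
    unfolding valid_in_frame_def sem_FIff_eq_1_iff sem_FBoxO by simp
qed

theorem mainTheorem14:
  fixes n :: nat
    and E :: "'s \<Rightarrow> ('a::finite) set \<Rightarrow> ('s \<Rightarrow> real) \<Rightarrow> real"
    and R :: "('s \<times> 's) set"
  assumes "n \<ge> 1"
    and "card (UNIV :: 'a set) \<ge> 2"
    and "enriched_frame n E R"
    and "standard_frame E R"
    and "playable_frame n E"
  shows "truly_playable_frame n E \<longleftrightarrow>
           (\<forall>\<phi>. valid_in_frame n E R (FIff (FBox {} \<phi>) (FBoxO \<phi>)))"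
proof -
  have "principal n (E u) \<longleftrightarrow> (\<forall>f. lval n f \<longrightarrow> E u {} f = min_over {v. (u, v) \<in> R} f)" for u
  proof (rule principal_iff_min_over_unavoidable[OF assms(1)])
    show "homogeneous n (E u)" using assms(5) unfolding playable_frame_def playable_def by blast
    show "eff_fun n (E u)" using assms(3) unfolding enriched_frame_def by blast
    show "{v. (u, v) \<in> R} = {v. E u {} (\<lambda>w. 1 - indicator {v} w) = 0}"
      using assms(4) unfolding standard_frame_def by blast
  qed
  then show ?thesis using assms(5)
    unfolding valid_box_empty_iff_min_over[OF assms(1,3)] truly_playable_frame_def
      truly_playable_def playable_frame_def by blast
qed

end
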